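(* Let $F\in\mathbb{C}[x_0,\ldots,x_n]_d$ and suppose there is a homogeneous ideal $I\subseteq\operatorname{Ann}(F)\subseteq S$ such that $S/I$ has constant Hilbert polynomial $r\in\mathbb{Z}_{>0}$ and $I_d=\overline{I}_d$. Then $\operatorname{cr}(F)\leq r$.
   Context: $S=\mathbb{C}[\alpha_0,\ldots,\alpha_n]$ acts on $S^*=\mathbb{C}[x_0,\ldots,x_n]$ by partial differentiation; $\operatorname{Ann}(F)=\{\theta\in S:\theta\lrcorner F=0\}$; $\overline{I}$ is the saturation with respect to $(\alpha_0,\ldots,\alpha_n)$. The cactus rank $\operatorname{cr}(F)$ is the least $r$ such that $[F]$ lies in the projective linear span of $\nu_d(R)$ for some zero-dimensional closed subscheme $R\subseteq\mathbb{P}(S^*_1)$ of length $r$, $\nu_d$ the $d$-th Veronese map $[L]\mapsto[L^d]$. *)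

theory Defs
  imports Complex_Main "HOL-Library.Poly_Mapping"
begin

text \<open>A monomial is an exponent vector (nat =>0 nat); a polynomial is a finitely supported map
  from monomials to coefficients.  Both S = C[alpha_0..alpha_n] and S* = C[x_0..x_n] are
  modelled as the polynomials whose monomials only involve the variables 0..n.\<close>

type_synonym mpoly = "(nat \<Rightarrow>\<^sub>0 nat) \<Rightarrow>\<^sub>0 complex"

definition mdeg :: "(nat \<Rightarrow>\<^sub>0 nat) \<Rightarrow> nat" where
  "mdeg m = (\<Sum>i\<in>Poly_Mapping.keys m. Poly_Mapping.lookup m i)"

definition in_ring :: "nat \<Rightarrow> mpoly \<Rightarrow> bool" where
  "in_ring n p \<longleftrightarrow> (\<forall>m\<in>Poly_Mapping.keys p. Poly_Mapping.keys m \<subseteq> {..n})"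

definition homog :: "nat \<Rightarrow> mpoly \<Rightarrow> bool" where
  "homog k p \<longleftrightarrow> (\<forall>m\<in>Poly_Mapping.keys p. mdeg m = k)"

definition hcomp :: "nat \<Rightarrow> mpoly \<Rightarrow> mpoly" where
  "hcomp k p = (\<Sum>m\<in>{m\<in>Poly_Mapping.keys p. mdeg m = k}. Poly_Mapping.single m (Poly_Mapping.lookup p m))"

text \<open>Action of S on S* by partial differentiation:
  alpha^a applied to x^b is  prod_i b_i!/(b_i-a_i)!  x^(b-a)  if a \<le> b pointwise, else 0.\<close>
definition mono_contract :: "(nat \<Rightarrow>\<^sub>0 nat) \<Rightarrow> (nat \<Rightarrow>\<^sub>0 nat) \<Rightarrow> mpoly" where
  "mono_contract a b =
     (if (\<forall>i. Poly_Mapping.lookup a i \<le> Poly_Mapping.lookup b i)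
      then Poly_Mapping.single (b - a)
             (\<Prod>i\<in>Poly_Mapping.keys b. of_nat (fact (Poly_Mapping.lookup b i)) / of_nat (fact (Poly_Mapping.lookup b i - Poly_Mapping.lookup a i)))
      else 0)"

definition contract :: "mpoly \<Rightarrow> mpoly \<Rightarrow> mpoly" where
  "contract \<theta> F = (\<Sum>a\<in>Poly_Mapping.keys \<theta>. \<Sum>b\<in>Poly_Mapping.keys F.
       Poly_Mapping.map (\<lambda>c. Poly_Mapping.lookup \<theta> a * Poly_Mapping.lookup F b * c) (mono_contract a b))"

definition Ann :: "nat \<Rightarrow> mpoly \<Rightarrow> mpoly set" where
  "Ann n F = {\<theta>. in_ring n \<theta> \<and> contract \<theta> F = 0}"

definition is_ideal :: "nat \<Rightarrow> mpoly set \<Rightarrow> bool" where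
  "is_ideal n I \<longleftrightarrow> I \<subseteq> {p. in_ring n p} \<and> 0 \<in> I \<and>
     (\<forall>p\<in>I. \<forall>q\<in>I. p + q \<in> I) \<and> (\<forall>p\<in>I. \<forall>q. in_ring n q \<longrightarrow> q * p \<in> I)"

definition homogeneous_ideal :: "nat \<Rightarrow> mpoly set \<Rightarrow> bool" where
  "homogeneous_ideal n I \<longleftrightarrow> is_ideal n I \<and> (\<forall>p\<in>I. \<forall>k. hcomp k p \<in> I)"

definition graded :: "nat \<Rightarrow> mpoly set \<Rightarrow> mpoly set" where
  "graded k I = {p\<in>I. homog k p}"

definition cscale :: "complex \<Rightarrow> mpoly \<Rightarrow> mpoly" where
  "cscale c p = Poly_Mapping.map (\<lambda>x. c * x) p"

definition cdim :: "mpoly set \<Rightarrow> nat" where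
  "cdim V = vector_space.dim cscale V"

definition hilbert_fun :: "nat \<Rightarrow> mpoly set \<Rightarrow> nat \<Rightarrow> nat" where
  "hilbert_fun n I k = cdim (graded k {p. in_ring n p}) - cdim (graded k I)"

definition const_hilbert_poly :: "nat \<Rightarrow> mpoly set \<Rightarrow> nat \<Rightarrow> bool" where
  "const_hilbert_poly n I r \<longleftrightarrow> (\<exists>k0. \<forall>k\<ge>k0. hilbert_fun n I k = r)"

text \<open>Saturation with respect to m = (alpha_0..alpha_n):  union over N of (I : m^N);
  m^N is generated by the monomials of degree N.\<close>
definition saturation :: "nat \<Rightarrow> mpoly set \<Rightarrow> mpoly set" where
  "saturation n I = {\<theta>. in_ring n \<theta> \<and> (\<exists>N. \<forall>a. Poly_Mapping.keys a \<subseteq> {..n} \<and> mdeg a = N \<longrightarrow>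
                         Poly_Mapping.single a 1 * \<theta> \<in> I)}"

text \<open>Zero-dimensional closed subschemes R of P^n of length r are identified with their
  saturated homogeneous ideals I_R with constant Hilbert polynomial r.  The (scheme-theoretic)
  projective linear span of nu_d(R) in P(S*_d) is the common zero set of (I_R)_d, i.e. the
  forms G of degree d with theta applied to G = 0 for all theta in (I_R)_d.\<close>
definition zero_dim_scheme_ideal :: "nat \<Rightarrow> mpoly set \<Rightarrow> nat \<Rightarrow> bool" where
  "zero_dim_scheme_ideal n J r \<longleftrightarrow>
     homogeneous_ideal n J \<and> saturation n J = J \<and> const_hilbert_poly n J r"

definition in_span_veronese :: "nat \<Rightarrow> nat \<Rightarrow> mpoly set \<Rightarrow> mpoly \<Rightarrow> bool" where
  "in_span_veronese n d J F \<longleftrightarrow> (\<forall>\<theta>\<in>graded d J. contract \<theta> F = 0)"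

definition cactus_rank :: "nat \<Rightarrow> nat \<Rightarrow> mpoly \<Rightarrow> nat" where
  "cactus_rank n d F =
     (LEAST r. \<exists>J. zero_dim_scheme_ideal n J r \<and> in_span_veronese n d J F)"

end

(* The saturation J of I is a saturated homogeneous ideal containing I, and it agrees with I in
   all large degrees: the ideals of elements whose generated homogeneous ideal lies in I from
   degree E on form an ascending chain in E, which stabilizes degreewise (Dickson's lemma applied to
   leading monomials), and every homogeneous element of J lies in one of them.  Hence S/J has
   the same constant Hilbert polynomial r, so J is the ideal of a zero-dimensional scheme of
   length r, and J_d = I_d <= Ann(F) puts F in the span of its Veronese image. *)

theory Submission
  imports Defs "HOL-Library.FuncSet"
begin

abbreviation X :: "(nat \<Rightarrow>\<^sub>0 nat) \<Rightarrow> mpoly" where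
  "X a \<equiv> Poly_Mapping.single a 1"

abbreviation var :: "nat \<Rightarrow> nat \<Rightarrow>\<^sub>0 nat" where
  "var i \<equiv> Poly_Mapping.single i 1"

lemma lookup_single_mult:
  fixes p :: mpoly
  shows "Poly_Mapping.lookup (Poly_Mapping.single m c * p) (m + u) = c * Poly_Mapping.lookup p u"
  by (simp add: lookup_mult lookup_single when_mult)

lemma keys_single_mult_subset:
  fixes p :: mpoly
  shows "Poly_Mapping.keys (Poly_Mapping.single m c * p) \<subseteq> (\<lambda>u. m + u) ` Poly_Mapping.keys p"
  using keys_mult[of "Poly_Mapping.single m c" p] by (auto split: if_splits)

lemma keys_single_mult:
  fixes p :: mpoly
  assumes "c \<noteq> 0"
  shows "Poly_Mapping.keys (Poly_Mapping.single m c * p) = (\<lambda>u. m + u) ` Poly_Mapping.keys p"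
proof
  show "Poly_Mapping.keys (Poly_Mapping.single m c * p) \<subseteq> (\<lambda>u. m + u) ` Poly_Mapping.keys p"
    by (rule keys_single_mult_subset)
  show "(\<lambda>u. m + u) ` Poly_Mapping.keys p \<subseteq> Poly_Mapping.keys (Poly_Mapping.single m c * p)"
    using assms by (auto simp: in_keys_iff lookup_single_mult)
qed

lemma keys_add_monom:
  fixes a b :: "nat \<Rightarrow>\<^sub>0 nat"
  shows "Poly_Mapping.keys (a + b) = Poly_Mapping.keys a \<union> Poly_Mapping.keys b"
  by (auto simp: in_keys_iff lookup_add)

lemma poly_eq_sum_monoms:
  "(p::mpoly) = (\<Sum>m\<in>Poly_Mapping.keys p. Poly_Mapping.single m (Poly_Mapping.lookup p m))"
proof (rule poly_mapping_eqI)
  fix k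
  have "(\<Sum>m\<in>Poly_Mapping.keys p. Poly_Mapping.lookup (Poly_Mapping.single m (Poly_Mapping.lookup p m)) k)
     = (\<Sum>m\<in>Poly_Mapping.keys p. if m = k then Poly_Mapping.lookup p m else 0)"
    by (intro sum.cong) (auto simp: lookup_single when_def)
  then show "Poly_Mapping.lookup p k =
      Poly_Mapping.lookup (\<Sum>m\<in>Poly_Mapping.keys p. Poly_Mapping.single m (Poly_Mapping.lookup p m)) k"
    by (simp add: lookup_sum in_keys_iff)
qed

lemma mdeg_eq_sum:
  assumes "finite S" "Poly_Mapping.keys m \<subseteq> S"
  shows "mdeg m = sum (Poly_Mapping.lookup m) S"
  unfolding mdeg_def using assms by (intro sum.mono_neutral_left) (auto simp: in_keys_iff)

lemma mdeg_add: "mdeg (a + b) = mdeg a + mdeg b"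
proof -
  let ?S = "Poly_Mapping.keys a \<union> Poly_Mapping.keys b"
  have "mdeg (a + b) = sum (Poly_Mapping.lookup (a + b)) ?S"
    using keys_add[of a b] by (intro mdeg_eq_sum) auto
  also have "\<dots> = sum (Poly_Mapping.lookup a) ?S + sum (Poly_Mapping.lookup b) ?S"
    by (simp add: lookup_add sum.distrib)
  also have "\<dots> = mdeg a + mdeg b"
    by (subst (1 2) mdeg_eq_sum[symmetric]) auto
  finally show ?thesis .
qed

lemma mdeg_eq_0_iff: "mdeg a = 0 \<longleftrightarrow> a = 0"
  unfolding mdeg_def by (auto simp: in_keys_iff poly_mapping_eq_iff fun_eq_iff)

lemma mdeg_0 [simp]: "mdeg 0 = 0"
  by (simp add: mdeg_def)

lemma mdeg_single: "mdeg (Poly_Mapping.single i k) = k"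
  unfolding mdeg_def by auto

lemma lookup_le_mdeg: "Poly_Mapping.lookup a i \<le> mdeg a"
  by (cases "i \<in> Poly_Mapping.keys a") (auto simp: mdeg_def in_keys_iff intro: member_le_sum)

lemma monom_eq_var_plus:
  fixes c :: "nat \<Rightarrow>\<^sub>0 nat"
  assumes "Poly_Mapping.keys c \<subseteq> {..n}" "mdeg c = Suc N"
  obtains i b where "i \<le> n" "c = var i + b" "Poly_Mapping.keys b \<subseteq> {..n}" "mdeg b = N"
proof -
  obtain i where i: "i \<in> Poly_Mapping.keys c"
    using assms(2) mdeg_eq_0_iff by force
  define b where "b = c - var i"
  have c: "c = var i + b"
    using i by (intro poly_mapping_eqI) (auto simp: b_def lookup_add lookup_minus lookup_single when_def in_keys_iff)
  have "Poly_Mapping.keys b \<subseteq> Poly_Mapping.keys c"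
    by (auto simp: b_def in_keys_iff lookup_minus)
  then have "Poly_Mapping.keys b \<subseteq> {..n}"
    using assms(1) by blast
  moreover have "mdeg b = N"
    using assms(2) by (subst (asm) c) (simp add: mdeg_add mdeg_single)
  moreover have "i \<le> n"
    using i assms(1) by auto
  ultimately show thesis
    using that c by blast
qed

lemma monom_factor_of_degree:
  fixes c :: "nat \<Rightarrow>\<^sub>0 nat"
  assumes "Poly_Mapping.keys c \<subseteq> {..n}" "N \<le> mdeg c"
  shows "\<exists>a b. c = a + b \<and> mdeg a = N \<and> Poly_Mapping.keys a \<subseteq> {..n} \<and> Poly_Mapping.keys b \<subseteq> {..n}"
  using assms
proof (induction N arbitrary: c)
  case 0
  then show ?case by (intro exI[of _ 0] exI[of _ c]) auto
next
  case (Suc N)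
  obtain i b where ib: "i \<le> n" "c = var i + b" "Poly_Mapping.keys b \<subseteq> {..n}" "mdeg b = mdeg c - 1"
    using monom_eq_var_plus[of c n "mdeg c - 1"] Suc.prems by auto
  have "N \<le> mdeg b"
    using ib(4) Suc.prems(2) by linarith
  then obtain a b' where "b = a + b'" "mdeg a = N" "Poly_Mapping.keys a \<subseteq> {..n}" "Poly_Mapping.keys b' \<subseteq> {..n}"
    using Suc.IH[OF ib(3)] by blast
  with ib show ?case
    by (intro exI[of _ "var i + a"] exI[of _ b']) (auto simp: mdeg_add mdeg_single keys_add_monom add.assoc)
qed

lemma finite_monoms_of_degree: "finite {a. Poly_Mapping.keys a \<subseteq> {..n} \<and> mdeg a = k}"
  (is "finite ?M")
proof -
  let ?r = "\<lambda>a. restrict (Poly_Mapping.lookup a) {..n}"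
  have "inj_on ?r ?M"
  proof (rule inj_onI)
    fix a b assume a: "a \<in> ?M" and b: "b \<in> ?M" and eq: "?r a = ?r b"
    show "a = b"
    proof (rule poly_mapping_eqI)
      fix i
      show "Poly_Mapping.lookup a i = Poly_Mapping.lookup b i"
      proof (cases "i \<le> n")
        case True
        then show ?thesis using fun_cong[OF eq, of i] by simp
      next
        case False
        then have "i \<notin> Poly_Mapping.keys a" "i \<notin> Poly_Mapping.keys b"
          using a b by auto
        then show ?thesis by (simp add: in_keys_iff)
      qed
    qed
  qed
  moreover have "?r ` ?M \<subseteq> PiE {..n} (\<lambda>_. {..k})"
    using lookup_le_mdeg by (auto simp: PiE_def extensional_def)
  then have "finite (?r ` ?M)"
    by (rule finite_subset) (intro finite_PiE, auto)
  ultimately show ?thesis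
    using finite_imageD by blast
qed

lemma lookup_hcomp:
  "Poly_Mapping.lookup (hcomp k p) u = (if mdeg u = k then Poly_Mapping.lookup p u else 0)"
proof -
  have "Poly_Mapping.lookup (hcomp k p) u =
     (\<Sum>m\<in>{m \<in> Poly_Mapping.keys p. mdeg m = k}. if m = u then Poly_Mapping.lookup p m else 0)"
    unfolding hcomp_def lookup_sum by (intro sum.cong) (auto simp: lookup_single when_def)
  then show ?thesis
    by (auto simp: in_keys_iff)
qed

lemma hcomp_add: "hcomp k (p + q) = hcomp k p + hcomp k q"
  by (rule poly_mapping_eqI) (simp add: lookup_hcomp lookup_add)

lemma hcomp_0 [simp]: "hcomp k 0 = 0"
  by (rule poly_mapping_eqI) (simp add: lookup_hcomp)

lemma hcomp_single_mult:
  fixes p :: mpoly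
  shows "hcomp i (Poly_Mapping.single m c * p) =
    (if mdeg m \<le> i then Poly_Mapping.single m c * hcomp (i - mdeg m) p else 0)"
proof (rule poly_mapping_eqI)
  fix k
  show "Poly_Mapping.lookup (hcomp i (Poly_Mapping.single m c * p)) k =
    Poly_Mapping.lookup (if mdeg m \<le> i then Poly_Mapping.single m c * hcomp (i - mdeg m) p else 0) k"
  proof (cases "\<exists>u. k = m + u")
    case True
    then obtain u where "k = m + u" by blast
    then show ?thesis
      by (auto simp: lookup_hcomp lookup_single_mult mdeg_add)
  next
    case False
    then have "k \<notin> Poly_Mapping.keys (Poly_Mapping.single m c' * q)" for c' and q :: mpoly
      using keys_single_mult_subset by blast
    then show ?thesis
      by (auto simp: lookup_hcomp in_keys_iff)
  qed
qed

lemma hcomp_homog: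
  assumes "homog j p"
  shows "hcomp k p = (if j = k then p else 0)"
  using assms unfolding homog_def
  by (intro poly_mapping_eqI) (auto simp: lookup_hcomp in_keys_iff)

lemma homog_add: "homog k p \<Longrightarrow> homog k q \<Longrightarrow> homog k (p + q)"
  unfolding homog_def using keys_add[of p q] by blast

lemma homog_single_mult:
  fixes p :: mpoly
  assumes "homog k p"
  shows "homog (mdeg m + k) (Poly_Mapping.single m c * p)"
  using assms keys_single_mult_subset[of m c p] unfolding homog_def by (auto simp: mdeg_add)

lemma homog_scale: "homog k p \<Longrightarrow> homog k (Poly_Mapping.single 0 c * p)"
  using homog_single_mult[of k p 0 c] by simp

lemma mdeg_in_keys_homog: "homog k p \<Longrightarrow> a \<in> Poly_Mapping.keys p \<Longrightarrow> mdeg a = k"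
  unfolding homog_def by blast

lemma in_ring_0 [simp]: "in_ring n 0"
  unfolding in_ring_def by simp

lemma in_ring_add: "in_ring n p \<Longrightarrow> in_ring n q \<Longrightarrow> in_ring n (p + q)"
  unfolding in_ring_def using keys_add[of p q] by blast

lemma in_ring_mult: "in_ring n p \<Longrightarrow> in_ring n q \<Longrightarrow> in_ring n (p * q)"
  unfolding in_ring_def using keys_mult[of p q] by (force simp: keys_add_monom)

lemma in_ring_single: "Poly_Mapping.keys m \<subseteq> {..n} \<Longrightarrow> in_ring n (Poly_Mapping.single m c)"
  unfolding in_ring_def by auto

lemma in_ring_hcomp: "in_ring n p \<Longrightarrow> in_ring n (hcomp k p)"
  unfolding in_ring_def by (auto simp: in_keys_iff lookup_hcomp split: if_splits)

lemma is_ideal_0: "is_ideal n I \<Longrightarrow> 0 \<in> I"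
  and is_ideal_add: "is_ideal n I \<Longrightarrow> p \<in> I \<Longrightarrow> q \<in> I \<Longrightarrow> p + q \<in> I"
  and is_ideal_mult: "is_ideal n I \<Longrightarrow> p \<in> I \<Longrightarrow> in_ring n q \<Longrightarrow> q * p \<in> I"
  and is_ideal_in_ring: "is_ideal n I \<Longrightarrow> p \<in> I \<Longrightarrow> in_ring n p"
  unfolding is_ideal_def by auto

lemma is_ideal_single_mult:
  "is_ideal n I \<Longrightarrow> p \<in> I \<Longrightarrow> Poly_Mapping.keys m \<subseteq> {..n} \<Longrightarrow> Poly_Mapping.single m c * p \<in> I"
  by (simp add: is_ideal_mult in_ring_single)

lemma homogeneous_ideal_hcomp: "homogeneous_ideal n I \<Longrightarrow> p \<in> I \<Longrightarrow> hcomp k p \<in> I"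
  unfolding homogeneous_ideal_def by blast

lemma is_idealI_monomial:
  assumes "Q \<subseteq> {p. in_ring n p}" and "0 \<in> Q"
    and add: "\<And>p q. p \<in> Q \<Longrightarrow> q \<in> Q \<Longrightarrow> p + q \<in> Q"
    and mon: "\<And>p m c. p \<in> Q \<Longrightarrow> Poly_Mapping.keys m \<subseteq> {..n} \<Longrightarrow> Poly_Mapping.single m c * p \<in> Q"
  shows "is_ideal n Q"
  unfolding is_ideal_def
proof (intro conjI ballI allI impI assms)
  fix p q assume p: "p \<in> Q" and q: "in_ring n q"
  have "(\<Sum>m\<in>M. Poly_Mapping.single m (Poly_Mapping.lookup q m) * p) \<in> Q"
    if "finite M" "M \<subseteq> Poly_Mapping.keys q" for M
    using that
  proof (induction M rule: finite_induct)
    case empty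
    then show ?case using \<open>0 \<in> Q\<close> by simp
  next
    case (insert m M)
    then have "Poly_Mapping.keys m \<subseteq> {..n}"
      using q unfolding in_ring_def by auto
    with insert p show ?case
      by (simp add: add mon)
  qed
  then show "q * p \<in> Q"
    by (subst poly_eq_sum_monoms[of q]) (simp add: sum_distrib_right)
qed

subsection \<open>Saturation\<close>

text \<open>\<open>colon_pow n I N\<close> is the colon ideal \<open>(I : m\<^sup>N)\<close>, \<open>m = (\<alpha>\<^sub>0, \<dots>, \<alpha>\<^sub>n)\<close>.\<close>

definition colon_pow :: "nat \<Rightarrow> mpoly set \<Rightarrow> nat \<Rightarrow> mpoly set" where
  "colon_pow n I N = {\<theta>. in_ring n \<theta> \<and> (\<forall>a. Poly_Mapping.keys a \<subseteq> {..n} \<and> mdeg a = N \<longrightarrow> X a * \<theta> \<in> I)}"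

lemma saturation_eq_UN_colon_pow: "saturation n I = (\<Union>N. colon_pow n I N)"
  unfolding saturation_def colon_pow_def by auto

lemma colon_pow_0: "is_ideal n I \<Longrightarrow> colon_pow n I 0 = I"
  unfolding colon_pow_def by (auto simp: mdeg_eq_0_iff is_ideal_in_ring)

lemma colon_pow_Suc:
  "\<theta> \<in> colon_pow n I (Suc N) \<longleftrightarrow> in_ring n \<theta> \<and> (\<forall>i\<le>n. X (var i) * \<theta> \<in> colon_pow n I N)"
proof
  assume \<theta>: "\<theta> \<in> colon_pow n I (Suc N)"
  have "X a * (X (var i) * \<theta>) \<in> I"
    if "i \<le> n" "Poly_Mapping.keys a \<subseteq> {..n}" "mdeg a = N" for i a
    using \<theta> that unfolding colon_pow_def
    by (auto simp: mult_single mult.assoc[symmetric] mdeg_add mdeg_single keys_add_monom)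
  with \<theta> show "in_ring n \<theta> \<and> (\<forall>i\<le>n. X (var i) * \<theta> \<in> colon_pow n I N)"
    unfolding colon_pow_def by (auto intro!: in_ring_mult in_ring_single)
next
  assume \<theta>: "in_ring n \<theta> \<and> (\<forall>i\<le>n. X (var i) * \<theta> \<in> colon_pow n I N)"
  have "X c * \<theta> \<in> I" if c: "Poly_Mapping.keys c \<subseteq> {..n}" "mdeg c = Suc N" for c
  proof -
    obtain i b where "i \<le> n" "c = var i + b" "Poly_Mapping.keys b \<subseteq> {..n}" "mdeg b = N"
      using monom_eq_var_plus[OF c] by blast
    with \<theta> show ?thesis
      unfolding colon_pow_def by (auto simp: mult_single mult.assoc[symmetric] add.commute)
  qed
  with \<theta> show "\<theta> \<in> colon_pow n I (Suc N)"
    unfolding colon_pow_def by blast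
qed

lemma colon_pow_mult_monom:
  assumes "is_ideal n I" "\<theta> \<in> colon_pow n I N" "Poly_Mapping.keys b \<subseteq> {..n}" "N \<le> mdeg b"
  shows "Poly_Mapping.single b c * \<theta> \<in> I"
proof -
  obtain a b' where ab: "b = a + b'" "mdeg a = N" "Poly_Mapping.keys a \<subseteq> {..n}" "Poly_Mapping.keys b' \<subseteq> {..n}"
    using monom_factor_of_degree[OF assms(3,4)] by blast
  have "X a * \<theta> \<in> I"
    using assms(2) ab unfolding colon_pow_def by auto
  then have "Poly_Mapping.single b' c * (X a * \<theta>) \<in> I"
    using is_ideal_single_mult[OF assms(1) _ ab(4)] by blast
  then show ?thesis
    by (simp add: ab(1) mult_single mult.assoc[symmetric] add.commute)
qed

lemma colon_pow_mono: "is_ideal n I \<Longrightarrow> N \<le> M \<Longrightarrow> colon_pow n I N \<subseteq> colon_pow n I M"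
  using colon_pow_mult_monom unfolding colon_pow_def by auto

lemma is_ideal_colon_pow:
  assumes "is_ideal n I"
  shows "is_ideal n (colon_pow n I N)"
proof (rule is_idealI_monomial)
  show "colon_pow n I N \<subseteq> {p. in_ring n p}" "0 \<in> colon_pow n I N"
    using is_ideal_0[OF assms] unfolding colon_pow_def by auto
  show "p + q \<in> colon_pow n I N" if "p \<in> colon_pow n I N" "q \<in> colon_pow n I N" for p q
    using that is_ideal_add[OF assms] unfolding colon_pow_def by (auto simp: distrib_left in_ring_add)
  show "Poly_Mapping.single m c * p \<in> colon_pow n I N"
    if p: "p \<in> colon_pow n I N" and m: "Poly_Mapping.keys m \<subseteq> {..n}" for p m c
  proof -
    have "X a * (Poly_Mapping.single m c * p) \<in> I"
      if a: "Poly_Mapping.keys a \<subseteq> {..n}" "mdeg a = N" for a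
    proof -
      have "X a * p \<in> I"
        using p a unfolding colon_pow_def by blast
      then have "Poly_Mapping.single m c * (X a * p) \<in> I"
        using is_ideal_single_mult[OF assms _ m] by blast
      then show ?thesis
        by (simp add: mult.left_commute)
    qed
    moreover have "in_ring n (Poly_Mapping.single m c * p)"
      using p m unfolding colon_pow_def by (auto intro: in_ring_mult in_ring_single)
    ultimately show ?thesis
      unfolding colon_pow_def by blast
  qed
qed

lemma colon_pow_hcomp:
  assumes "homogeneous_ideal n I" "\<theta> \<in> colon_pow n I N"
  shows "hcomp k \<theta> \<in> colon_pow n I N"
proof -
  have "X a * hcomp k \<theta> = hcomp (N + k) (X a * \<theta>)" if "mdeg a = N" for a
    using that by (simp add: hcomp_single_mult)
  then show ?thesis
    using assms homogeneous_ideal_hcomp unfolding colon_pow_def by (auto intro: in_ring_hcomp)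
qed

lemma subset_saturation: "is_ideal n I \<Longrightarrow> I \<subseteq> saturation n I"
  using colon_pow_0 saturation_eq_UN_colon_pow by blast

lemma homogeneous_ideal_saturation:
  assumes "homogeneous_ideal n I"
  shows "homogeneous_ideal n (saturation n I)"
proof -
  have I: "is_ideal n I"
    using assms unfolding homogeneous_ideal_def by blast
  have common: "\<exists>N. p \<in> colon_pow n I N \<and> q \<in> colon_pow n I N"
    if p: "p \<in> saturation n I" and q: "q \<in> saturation n I" for p q
  proof -
    obtain N1 N2 where "p \<in> colon_pow n I N1" "q \<in> colon_pow n I N2"
      using p q unfolding saturation_eq_UN_colon_pow by blast
    then show ?thesis
      using colon_pow_mono[OF I, of _ "max N1 N2"] by (meson max.cobounded1 max.cobounded2 subsetD)
  qed
  have "is_ideal n (saturation n I)"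
  proof (rule is_idealI_monomial)
    show "saturation n I \<subseteq> {p. in_ring n p}"
      unfolding saturation_def by auto
    show "0 \<in> saturation n I"
      using is_ideal_0[OF I] subset_saturation[OF I] by blast
    show "p + q \<in> saturation n I" if "p \<in> saturation n I" "q \<in> saturation n I" for p q
      using common[OF that] is_ideal_add[OF is_ideal_colon_pow[OF I]]
      unfolding saturation_eq_UN_colon_pow by blast
    show "Poly_Mapping.single m c * p \<in> saturation n I"
      if "p \<in> saturation n I" "Poly_Mapping.keys m \<subseteq> {..n}" for p m c
      using that is_ideal_single_mult[OF is_ideal_colon_pow[OF I]]
      unfolding saturation_eq_UN_colon_pow by blast
  qed
  moreover have "hcomp k p \<in> saturation n I" if "p \<in> saturation n I" for p k
    using that colon_pow_hcomp[OF assms] unfolding saturation_eq_UN_colon_pow by blast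
  ultimately show ?thesis
    unfolding homogeneous_ideal_def by blast
qed

lemma saturation_saturation:
  assumes "homogeneous_ideal n I"
  shows "saturation n (saturation n I) = saturation n I"
proof
  let ?J = "saturation n I"
  have I: "is_ideal n I" and J: "is_ideal n ?J"
    using assms homogeneous_ideal_saturation[OF assms] unfolding homogeneous_ideal_def by blast+
  show "?J \<subseteq> saturation n ?J"
    using subset_saturation[OF J] .
  have "colon_pow n ?J N \<subseteq> ?J" for N
  proof (induction N)
    case 0
    then show ?case using colon_pow_0[OF J] by simp
  next
    case (Suc N)
    show ?case
    proof
      fix \<theta> assume "\<theta> \<in> colon_pow n ?J (Suc N)"
      then have \<theta>: "in_ring n \<theta>" "\<forall>i\<le>n. X (var i) * \<theta> \<in> ?J"
        using Suc.IH colon_pow_Suc[of \<theta>] by blast+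
      then have "\<forall>i\<le>n. \<exists>N. X (var i) * \<theta> \<in> colon_pow n I N"
        unfolding saturation_eq_UN_colon_pow by blast
      then obtain M where M: "\<And>i. i \<le> n \<Longrightarrow> X (var i) * \<theta> \<in> colon_pow n I (M i)"
        by metis
      have "X (var i) * \<theta> \<in> colon_pow n I (Max (M ` {..n}))" if "i \<le> n" for i
      proof -
        have "M i \<le> Max (M ` {..n})"
          using that by (intro Max_ge) auto
        then show ?thesis
          using M[OF that] colon_pow_mono[OF I] by blast
      qed
      then have "\<theta> \<in> colon_pow n I (Suc (Max (M ` {..n})))"
        using \<theta>(1) colon_pow_Suc by blast
      then show "\<theta> \<in> ?J"
        unfolding saturation_eq_UN_colon_pow by blast
    qed
  qed
  then show "saturation n ?J \<subseteq> ?J"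
    unfolding saturation_eq_UN_colon_pow[of n ?J] by blast
qed

subsection \<open>Dickson's lemma\<close>

lemma incseq_subseq_nat:
  fixes s :: "nat \<Rightarrow> nat"
  shows "\<exists>h. strict_mono h \<and> incseq (s \<circ> h)"
proof -
  \<comment> \<open>pass to positions where s attains the minimum of its tail\<close>
  have "\<exists>x>k. \<forall>m\<ge>x. s x \<le> s m" for k
    using ex_has_least_nat[of "\<lambda>i. k < i" "Suc k" s] by (meson lessI order.strict_trans2)
  then obtain h where h: "\<forall>j. (\<forall>m\<ge>h j. s (h j) \<le> s m) \<and> h j < h (Suc j)"
    using dependent_nat_choice[of "\<lambda>_ x. \<forall>m\<ge>x. s x \<le> s m" "\<lambda>_ x y. x < y"] by blast
  then have "strict_mono h"
    by (simp add: strict_mono_Suc_iff)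
  moreover have "incseq (s \<circ> h)"
    using h by (intro incseq_SucI) (simp add: less_imp_le)
  ultimately show ?thesis
    by blast
qed

lemma incseq_subseq_lookup:
  fixes f :: "nat \<Rightarrow> (nat \<Rightarrow>\<^sub>0 nat)"
  shows "\<exists>h. strict_mono h \<and> (\<forall>i<m. incseq (\<lambda>j. Poly_Mapping.lookup (f (h j)) i))"
proof (induction m)
  case 0
  show ?case
    using strict_mono_id by blast
next
  case (Suc m)
  then obtain h where h: "strict_mono h" "\<forall>i<m. incseq (\<lambda>j. Poly_Mapping.lookup (f (h j)) i)"
    by blast
  obtain h' where h': "strict_mono h'" "incseq ((\<lambda>j. Poly_Mapping.lookup (f (h j)) m) \<circ> h')"
    using incseq_subseq_nat by blast
  have "incseq (\<lambda>j. Poly_Mapping.lookup (f (h (h' j))) i)" if "i < m" for i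
    using h(2) that h'(1) by (simp add: incseq_def strict_mono_less_eq)
  then have "\<forall>i<Suc m. incseq (\<lambda>j. Poly_Mapping.lookup (f ((h \<circ> h') j)) i)"
    using h'(2) by (auto simp: less_Suc_eq comp_def)
  then show ?case
    using strict_mono_o[OF h(1) h'(1)] by blast
qed

lemma dickson:
  fixes f :: "nat \<Rightarrow> (nat \<Rightarrow>\<^sub>0 nat)"
  assumes "\<And>j. Poly_Mapping.keys (f j) \<subseteq> {..n}"
  shows "\<exists>i j. i < j \<and> Poly_Mapping.lookup (f i) \<le> Poly_Mapping.lookup (f j)"
proof -
  obtain h where h: "strict_mono h" "\<forall>i<Suc n. incseq (\<lambda>j. Poly_Mapping.lookup (f (h j)) i)"
    using incseq_subseq_lookup by blast
  have "Poly_Mapping.lookup (f (h 0)) i \<le> Poly_Mapping.lookup (f (h 1)) i" for i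
  proof (cases "i \<le> n")
    case True
    then show ?thesis
      using h(2) by (simp add: incseq_def)
  next
    case False
    then have "i \<notin> Poly_Mapping.keys (f (h 0))"
      using assms by auto
    then show ?thesis
      by (simp add: in_keys_iff)
  qed
  moreover have "h 0 < h 1"
    using h(1) by (simp add: strict_mono_def)
  ultimately show ?thesis
    by (auto simp: le_fun_def)
qed

lemma monomial_chain_stabilizes:
  fixes U :: "nat \<Rightarrow> (nat \<Rightarrow>\<^sub>0 nat) set"
  assumes mono: "\<And>i j. i \<le> j \<Longrightarrow> U i \<subseteq> U j"
    and keys: "\<And>i a. a \<in> U i \<Longrightarrow> Poly_Mapping.keys a \<subseteq> {..n}"
    and closed: "\<And>i a b. a \<in> U i \<Longrightarrow> Poly_Mapping.lookup a \<le> Poly_Mapping.lookup b \<Longrightarrow>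
      Poly_Mapping.keys b \<subseteq> {..n} \<Longrightarrow> b \<in> U i"
  shows "\<exists>i0. \<forall>i\<ge>i0. U i = U i0"
proof (rule ccontr)
  assume "\<not> ?thesis"
  then have "\<forall>i0. \<exists>i a. i0 < i \<and> a \<in> U i \<and> a \<notin> U i0"
    using mono by (metis order_le_less subset_antisym subsetI)
  then obtain nxt el where step: "\<And>i0. i0 < nxt i0 \<and> el i0 \<in> U (nxt i0) \<and> el i0 \<notin> U i0"
    by metis
  define s where "s k = (nxt ^^ k) 0" for k
  have s_Suc: "s (Suc k) = nxt (s k)" for k
    by (simp add: s_def)
  have "strict_mono s"
    by (simp add: strict_mono_Suc_iff s_Suc step)
  obtain i j where ij: "i < j" "Poly_Mapping.lookup (el (s i)) \<le> Poly_Mapping.lookup (el (s j))"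
    using dickson[of "\<lambda>k. el (s k)" n] step keys by blast
  have "el (s i) \<in> U (s j)"
    using step[of "s i"] mono strict_mono_less_eq[OF \<open>strict_mono s\<close>, of "Suc i" j] ij(1)
    by (auto simp: s_Suc)
  then have "el (s j) \<in> U (s j)"
    using closed ij(2) keys step by blast
  then show False
    using step by blast
qed

subsection \<open>Leading monomials and ascending chains of ideals\<close>

definition lead_monom :: "mpoly \<Rightarrow> (nat \<Rightarrow>\<^sub>0 nat)" where
  "lead_monom p = Max (Poly_Mapping.keys p)"

lemma lead_monom_in_keys: "p \<noteq> 0 \<Longrightarrow> lead_monom p \<in> Poly_Mapping.keys p"
  unfolding lead_monom_def by (rule Max_in) auto

lemma le_lead_monom: "a \<in> Poly_Mapping.keys p \<Longrightarrow> a \<le> lead_monom p"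
  unfolding lead_monom_def by (rule Max_ge) auto

lemma lead_monom_single_mult:
  fixes p :: mpoly
  assumes "c \<noteq> 0" "p \<noteq> 0"
  shows "Poly_Mapping.single m c * p \<noteq> 0" "lead_monom (Poly_Mapping.single m c * p) = m + lead_monom p"
proof -
  have keys: "Poly_Mapping.keys (Poly_Mapping.single m c * p) = (\<lambda>u. m + u) ` Poly_Mapping.keys p"
    using keys_single_mult[OF assms(1)] .
  then show "Poly_Mapping.single m c * p \<noteq> 0"
    using assms(2) by (metis image_is_empty keys_eq_empty)
  have "mono (\<lambda>u::nat \<Rightarrow>\<^sub>0 nat. m + u)"
    by (intro monoI add_left_mono)
  then show "lead_monom (Poly_Mapping.single m c * p) = m + lead_monom p"
    unfolding lead_monom_def keys using assms(2) by (simp add: mono_Max_commute)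
qed

lemma graded_ideal_lincomb:
  assumes "is_ideal n A" "p \<in> graded k A" "q \<in> graded k A"
  shows "p + Poly_Mapping.single 0 c * q \<in> graded k A"
  using assms is_ideal_add is_ideal_single_mult[of n A q 0 c]
  unfolding graded_def by (auto intro: homog_add homog_scale)

text \<open>Reduce a counterexample by an element of \<open>A\<close> with the same leading monomial; this
  descends along the finitely many monomials of degree \<open>k\<close>.\<close>

lemma graded_subset_if_lead_monoms:
  assumes A: "is_ideal n A" and B: "is_ideal n B" and "A \<subseteq> B"
    and lead: "\<And>w. w \<in> graded k B \<Longrightarrow> w \<noteq> 0 \<Longrightarrow> \<exists>v\<in>graded k A. v \<noteq> 0 \<and> lead_monom v = lead_monom w"
  shows "graded k B \<subseteq> graded k A"
proof (rule ccontr)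
  let ?bad = "graded k B - graded k A"
  assume "\<not> ?thesis"
  then have "?bad \<noteq> {}"
    by blast
  have nonzero: "w \<noteq> 0" if "w \<in> ?bad" for w
    using that is_ideal_0[OF A] by (auto simp: graded_def)
  have "lead_monom ` ?bad \<subseteq> {a. Poly_Mapping.keys a \<subseteq> {..n} \<and> mdeg a = k}"
    using nonzero lead_monom_in_keys is_ideal_in_ring[OF B]
    by (fastforce simp: graded_def homog_def in_ring_def)
  then have "finite (lead_monom ` ?bad)"
    using finite_monoms_of_degree finite_subset by blast
  then have "Min (lead_monom ` ?bad) \<in> lead_monom ` ?bad"
    using \<open>?bad \<noteq> {}\<close> by (intro Min_in) auto
  then obtain w where w: "w \<in> ?bad" "lead_monom w = Min (lead_monom ` ?bad)"
    by (metis (no_types, lifting) imageE)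
  have min: "lead_monom w \<le> lead_monom w'" if "w' \<in> ?bad" for w'
    using w(2) that \<open>finite (lead_monom ` ?bad)\<close> by simp
  obtain v where v: "v \<in> graded k A" "v \<noteq> 0" "lead_monom v = lead_monom w"
    using lead w nonzero by blast
  define c where "c = Poly_Mapping.lookup w (lead_monom w) / Poly_Mapping.lookup v (lead_monom w)"
  define w' where "w' = w + Poly_Mapping.single 0 (- c) * v"
  have lookup_w': "Poly_Mapping.lookup w' u = Poly_Mapping.lookup w u - c * Poly_Mapping.lookup v u" for u
    unfolding w'_def using lookup_single_mult[of 0 "- c" v u] by (simp add: lookup_add)
  have "w' \<in> ?bad"
  proof
    show "w' \<in> graded k B"
      unfolding w'_def using graded_ideal_lincomb[OF B] w v(1) \<open>A \<subseteq> B\<close> by (auto simp: graded_def)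
    have "w = w' + Poly_Mapping.single 0 c * v"
      by (rule poly_mapping_eqI) (simp add: lookup_add lookup_w' lookup_single_mult[of 0 _ _, simplified])
    then show "w' \<notin> graded k A"
      using graded_ideal_lincomb[OF A _ v(1)] w by auto
  qed
  have "lead_monom w' < lead_monom w"
  proof -
    have "u \<le> lead_monom w" if "u \<in> Poly_Mapping.keys w'" for u
    proof -
      have "u \<in> Poly_Mapping.keys w \<or> u \<in> Poly_Mapping.keys v"
        using that lookup_w'[of u] by (auto simp: in_keys_iff)
      then show ?thesis
        using le_lead_monom[of u w] le_lead_monom[of u v] v(3) by auto
    qed
    then have "lead_monom w' \<le> lead_monom w"
      using lead_monom_in_keys[OF nonzero[OF \<open>w' \<in> ?bad\<close>]] by blast
    moreover have "Poly_Mapping.lookup w' (lead_monom w) = 0"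
      using lead_monom_in_keys[OF v(2)] v(3) by (simp add: lookup_w' c_def in_keys_iff)
    then have "lead_monom w' \<noteq> lead_monom w"
      using lead_monom_in_keys[OF nonzero[OF \<open>w' \<in> ?bad\<close>]] by (auto simp: in_keys_iff)
    ultimately show ?thesis
      by simp
  qed
  with min[OF \<open>w' \<in> ?bad\<close>] show False
    by simp
qed

lemma ideal_chain_graded_stabilizes:
  fixes C :: "nat \<Rightarrow> mpoly set"
  assumes ideal: "\<And>i. is_ideal n (C i)" and mono: "\<And>i j. i \<le> j \<Longrightarrow> C i \<subseteq> C j"
  shows "\<exists>i0. \<forall>i\<ge>i0. \<forall>k. graded k (C i) = graded k (C i0)"
proof -
  define U where "U i = lead_monom ` {p \<in> C i. p \<noteq> 0 \<and> (\<exists>k. homog k p)}" for i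
  have "\<exists>i0. \<forall>i\<ge>i0. U i = U i0"
  proof (rule monomial_chain_stabilizes)
    show "U i \<subseteq> U j" if "i \<le> j" for i j
      unfolding U_def using mono[OF that] by blast
    show "Poly_Mapping.keys a \<subseteq> {..n}" if "a \<in> U i" for a i
      using that lead_monom_in_keys is_ideal_in_ring[OF ideal] unfolding U_def in_ring_def by blast
    show "b \<in> U i"
      if a: "a \<in> U i" and ab: "Poly_Mapping.lookup a \<le> Poly_Mapping.lookup b"
        and b: "Poly_Mapping.keys b \<subseteq> {..n}" for a b i
    proof -
      obtain p k where p: "a = lead_monom p" "p \<in> C i" "p \<noteq> 0" "homog k p"
        using a unfolding U_def by blast
      define e where "e = b - a"
      have "e + a = b"
        using ab unfolding e_def le_fun_def by (intro poly_mapping_eqI) (simp add: lookup_add lookup_minus)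
      moreover have "Poly_Mapping.keys e \<subseteq> Poly_Mapping.keys b"
        unfolding e_def by (auto simp: in_keys_iff lookup_minus)
      then have "Poly_Mapping.keys e \<subseteq> {..n}"
        using b by blast
      then have "X e * p \<in> C i"
        using is_ideal_single_mult[OF ideal p(2)] by blast
      moreover have "homog (mdeg e + k) (X e * p)"
        using homog_single_mult[OF p(4)] .
      ultimately show ?thesis
        unfolding U_def using lead_monom_single_mult[of 1 p e] p by force
    qed
  qed
  then obtain i0 where i0: "\<forall>i\<ge>i0. U i = U i0"
    by blast
  have "graded k (C i) \<subseteq> graded k (C i0)" if "i \<ge> i0" for i k
  proof (rule graded_subset_if_lead_monoms[OF ideal ideal mono[OF that]])
    fix w assume w: "w \<in> graded k (C i)" "w \<noteq> 0"
    then have "lead_monom w \<in> U i0"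
      using i0 that unfolding U_def graded_def by blast
    then obtain v k' where v: "lead_monom w = lead_monom v" "v \<in> C i0" "v \<noteq> 0" "homog k' v"
      unfolding U_def by blast
    have "mdeg (lead_monom w) = k"
      using w lead_monom_in_keys mdeg_in_keys_homog unfolding graded_def by blast
    moreover have "mdeg (lead_monom v) = k'"
      using v lead_monom_in_keys mdeg_in_keys_homog by blast
    ultimately have "k' = k"
      using v(1) by simp
    then show "\<exists>v\<in>graded k (C i0). v \<noteq> 0 \<and> lead_monom v = lead_monom w"
      using v unfolding graded_def by auto
  qed
  moreover have "graded k (C i0) \<subseteq> graded k (C i)" if "i \<ge> i0" for i k
    using mono[OF that] unfolding graded_def by blast
  ultimately show ?thesis
    by blast
qed

subsection \<open>The saturation agrees with the ideal in high degrees\<close>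

text \<open>\<open>\<theta> \<in> colon_from n I E\<close> iff the homogeneous ideal generated by the components of \<open>\<theta>\<close>
  lies in \<open>I\<close> from degree \<open>E\<close> on.\<close>

definition colon_from :: "nat \<Rightarrow> mpoly set \<Rightarrow> nat \<Rightarrow> mpoly set" where
  "colon_from n I E = {\<theta>. in_ring n \<theta> \<and>
     (\<forall>i b. Poly_Mapping.keys b \<subseteq> {..n} \<and> E \<le> mdeg b + i \<longrightarrow> X b * hcomp i \<theta> \<in> I)}"

lemma colon_from_mono: "E \<le> E' \<Longrightarrow> colon_from n I E \<subseteq> colon_from n I E'"
  unfolding colon_from_def by auto

lemma is_ideal_colon_from:
  assumes I: "is_ideal n I"
  shows "is_ideal n (colon_from n I E)"
proof (rule is_idealI_monomial)
  show "colon_from n I E \<subseteq> {p. in_ring n p}" "0 \<in> colon_from n I E"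
    using is_ideal_0[OF I] unfolding colon_from_def by auto
  show "p + q \<in> colon_from n I E" if "p \<in> colon_from n I E" "q \<in> colon_from n I E" for p q
    using that is_ideal_add[OF I] unfolding colon_from_def
    by (auto simp: hcomp_add distrib_left intro: in_ring_add)
  show "Poly_Mapping.single m c * p \<in> colon_from n I E"
    if p: "p \<in> colon_from n I E" and m: "Poly_Mapping.keys m \<subseteq> {..n}" for p m c
  proof -
    have "X b * hcomp i (Poly_Mapping.single m c * p) \<in> I"
      if b: "Poly_Mapping.keys b \<subseteq> {..n}" "E \<le> mdeg b + i" for i b
    proof (cases "mdeg m \<le> i")
      case True
      have "E \<le> mdeg (b + m) + (i - mdeg m)"
        using b(2) True by (simp add: mdeg_add)
      then have "X (b + m) * hcomp (i - mdeg m) p \<in> I"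
        using p b(1) m unfolding colon_from_def by (simp add: keys_add_monom)
      then have "Poly_Mapping.single 0 c * (X (b + m) * hcomp (i - mdeg m) p) \<in> I"
        using is_ideal_single_mult[OF I] by simp
      then show ?thesis
        using True by (simp add: hcomp_single_mult mult_single mult.assoc[symmetric])
    next
      case False
      then show ?thesis
        using is_ideal_0[OF I] by (simp add: hcomp_single_mult)
    qed
    moreover have "in_ring n (Poly_Mapping.single m c * p)"
      using p m unfolding colon_from_def by (auto intro: in_ring_mult in_ring_single)
    ultimately show ?thesis
      unfolding colon_from_def by blast
  qed
qed

lemma homog_colon_pow_in_colon_from:
  assumes "is_ideal n I" "\<theta> \<in> colon_pow n I N" "homog j \<theta>"
  shows "\<theta> \<in> colon_from n I (N + j)"
proof -
  have "X b * hcomp i \<theta> \<in> I" if "Poly_Mapping.keys b \<subseteq> {..n}" "N + j \<le> mdeg b + i" for i b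
  proof (cases "i = j")
    case True
    then show ?thesis
      using that colon_pow_mult_monom[OF assms(1,2)] hcomp_homog[OF assms(3)] by simp
  next
    case False
    then show ?thesis
      using is_ideal_0[OF assms(1)] hcomp_homog[OF assms(3)] by simp
  qed
  then show ?thesis
    using assms(2) unfolding colon_from_def colon_pow_def by blast
qed

lemma graded_colon_from_subset:
  assumes "E \<le> k"
  shows "graded k (colon_from n I E) \<subseteq> I"
proof
  fix \<theta> assume "\<theta> \<in> graded k (colon_from n I E)"
  then have \<theta>: "\<forall>i b. Poly_Mapping.keys b \<subseteq> {..n} \<and> E \<le> mdeg b + i \<longrightarrow> X b * hcomp i \<theta> \<in> I"
      "homog k \<theta>"
    unfolding colon_from_def graded_def by auto
  then show "\<theta> \<in> I"
    using \<theta>(1)[rule_format, of 0 k] assms by (simp add: hcomp_homog)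
qed

lemma graded_saturation_eventually_eq:
  assumes "homogeneous_ideal n I"
  shows "\<exists>E. \<forall>k\<ge>E. graded k (saturation n I) = graded k I"
proof -
  have I: "is_ideal n I"
    using assms unfolding homogeneous_ideal_def by blast
  have "\<exists>E0. \<forall>E\<ge>E0. \<forall>k. graded k (colon_from n I E) = graded k (colon_from n I E0)"
    by (rule ideal_chain_graded_stabilizes[where n = n]) (simp_all add: is_ideal_colon_from[OF I] colon_from_mono)
  then obtain E0 where E0: "\<forall>E\<ge>E0. \<forall>k. graded k (colon_from n I E) = graded k (colon_from n I E0)"
    by blast
  have "graded k (saturation n I) \<subseteq> graded k I" if "E0 \<le> k" for k
  proof
    fix \<theta> assume "\<theta> \<in> graded k (saturation n I)"
    then have "\<theta> \<in> saturation n I" "homog k \<theta>"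
      by (simp_all add: graded_def)
    then obtain N where "\<theta> \<in> colon_pow n I N"
      unfolding saturation_eq_UN_colon_pow by blast
    then have "\<theta> \<in> colon_from n I (N + k)"
      using homog_colon_pow_in_colon_from[OF I] \<open>homog k \<theta>\<close> by blast
    then have "\<theta> \<in> graded k (colon_from n I (max (N + k) E0))"
      using colon_from_mono[of "N + k" "max (N + k) E0"] \<open>homog k \<theta>\<close> unfolding graded_def by auto
    moreover have "graded k (colon_from n I (max (N + k) E0)) = graded k (colon_from n I E0)"
      using E0 max.cobounded2 by blast
    ultimately have "\<theta> \<in> graded k (colon_from n I E0)"
      by simp
    then have "\<theta> \<in> I"
      using graded_colon_from_subset[OF that] by blast
    then show "\<theta> \<in> graded k I"
      using \<open>homog k \<theta>\<close> by (simp add: graded_def)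
  qed
  moreover have "graded k I \<subseteq> graded k (saturation n I)" for k
    using subset_saturation[OF I] unfolding graded_def by blast
  ultimately show ?thesis
    by (meson subset_antisym)
qed

lemma const_hilbert_poly_saturation:
  assumes "homogeneous_ideal n I" "const_hilbert_poly n I r"
  shows "const_hilbert_poly n (saturation n I) r"
proof -
  obtain E where "\<forall>k\<ge>E. graded k (saturation n I) = graded k I"
    using graded_saturation_eventually_eq[OF assms(1)] by blast
  moreover obtain k0 where "\<forall>k\<ge>k0. hilbert_fun n I k = r"
    using assms(2) unfolding const_hilbert_poly_def by blast
  ultimately have "\<forall>k\<ge>max E k0. hilbert_fun n (saturation n I) k = r"
    unfolding hilbert_fun_def by simp
  then show ?thesis
    unfolding const_hilbert_poly_def by blast
qed

theorem corollary3p3: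
  fixes n d r :: nat and F :: mpoly and I :: "mpoly set"
  assumes "in_ring n F" and "homog d F"
    and "homogeneous_ideal n I"
    and "I \<subseteq> Ann n F"
    and "r > 0"
    and "const_hilbert_poly n I r"
    and "graded d I = graded d (saturation n I)"
  shows "cactus_rank n d F \<le> r"
proof -
  let ?J = "saturation n I"
  have "zero_dim_scheme_ideal n ?J r"
    unfolding zero_dim_scheme_ideal_def
    using homogeneous_ideal_saturation[OF assms(3)] saturation_saturation[OF assms(3)]
      const_hilbert_poly_saturation[OF assms(3,6)]
    by blast
  moreover have "in_span_veronese n d ?J F"
  proof (unfold in_span_veronese_def, rule ballI)
    fix \<theta> assume "\<theta> \<in> graded d ?J"
    then have "\<theta> \<in> graded d I"
      using assms(7) by simp
    then show "contract \<theta> F = 0"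
      using assms(4) unfolding Ann_def graded_def by blast
  qed
  ultimately have "\<exists>J. zero_dim_scheme_ideal n J r \<and> in_span_veronese n d J F"
    by blast
  then show ?thesis
    unfolding cactus_rank_def by (rule Least_le)
qed

end
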